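(* Let $n>3$ be odd. Let $H_n$ be the bipartite graph with vertex classes $A=\{a_0,\dots,a_{n-1}\}$ and $B=\{b_0,\dots,b_{n-1}\}$ whose edge set is $M_0\cup M_1\cup M_2$, where $M_j=\{a_ib_{i+j}: 0\le i\le n-1\}$ with indices modulo $n$. Then $H_n$ is $3$-regular, for any two distinct $j,j'\in\{0,1,2\}$ the graph $M_j\cup M_{j'}$ is a Hamilton cycle of $H_n$, and $m(H_n)=4$.
   Context: All graphs are finite and simple. For graphs $G_1=(V,E_1)$, $G_2=(V,E_2)$, their symmetric difference is $(V,E_1\oplus E_2)$, where $E_1\oplus E_2$ is the set of edges in exactly one of $E_1,E_2$. A connectivity code for $H=(V,E)$ is a collection of distinct spanning subgraphs $(V,E')$, $E'\subseteq E$, such that the symmetric difference of any two distinct members is a connected graph on $V$; $m(H)$ is the maximum cardinality of a connectivity code for $H$. *)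

theory Defs
  imports Main
begin

definition simple_graph :: "'a set \<Rightarrow> 'a set set \<Rightarrow> bool" where
  "simple_graph V E \<longleftrightarrow> finite V \<and>
     (\<forall>e\<in>E. \<exists>u v. u \<in> V \<and> v \<in> V \<and> u \<noteq> v \<and> e = {u, v})"

definition degree :: "'a set set \<Rightarrow> 'a \<Rightarrow> nat" where
  "degree E v = card {e\<in>E. v \<in> e}"

definition regular :: "nat \<Rightarrow> 'a set \<Rightarrow> 'a set set \<Rightarrow> bool" where
  "regular k V E \<longleftrightarrow> (\<forall>v\<in>V. degree E v = k)"

definition connected_graph :: "'a set \<Rightarrow> 'a set set \<Rightarrow> bool" where
  "connected_graph V F \<longleftrightarrow> V \<noteq> {} \<and>
     (\<forall>u\<in>V. \<forall>v\<in>V. (\<lambda>x y. {x, y} \<in> F)\<^sup>*\<^sup>* u v)"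

definition hamilton_cycle :: "'a set \<Rightarrow> 'a set set \<Rightarrow> 'a set set \<Rightarrow> bool" where
  "hamilton_cycle V E F \<longleftrightarrow> F \<subseteq> E \<and>
     (\<exists>vs. distinct vs \<and> set vs = V \<and> length vs \<ge> 3 \<and>
        F = {{vs ! k, vs ! ((k + 1) mod length vs)} | k. k < length vs})"

definition sym_diff :: "'b set \<Rightarrow> 'b set \<Rightarrow> 'b set" where
  "sym_diff X Y = (X - Y) \<union> (Y - X)"

definition connectivity_code :: "'a set \<Rightarrow> 'a set set \<Rightarrow> 'a set set set \<Rightarrow> bool" where
  "connectivity_code V E C \<longleftrightarrow> (\<forall>F\<in>C. F \<subseteq> E) \<and>
     (\<forall>F1\<in>C. \<forall>F2\<in>C. F1 \<noteq> F2 \<longrightarrow> connected_graph V (sym_diff F1 F2))"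

definition m_code :: "'a set \<Rightarrow> 'a set set \<Rightarrow> nat" where
  "m_code V E = Max {card C | C. connectivity_code V E C}"

text \<open>The graph H_n: vertices a_i = Inl i, b_i = Inr i for i < n.\<close>
definition Hn_vertices :: "nat \<Rightarrow> (nat + nat) set" where
  "Hn_vertices n = Inl ` {..<n} \<union> Inr ` {..<n}"

definition Mj :: "nat \<Rightarrow> nat \<Rightarrow> (nat + nat) set set" where
  "Mj n j = {{Inl i, Inr ((i + j) mod n)} | i. i < n}"

definition Hn_edges :: "nat \<Rightarrow> (nat + nat) set set" where
  "Hn_edges n = Mj n 0 \<union> Mj n 1 \<union> Mj n 2"

end

theory Submission
  imports Defs "HOL-Number_Theory.Cong"
begin

text \<open>
  The matchings \<open>M\<^sub>0, M\<^sub>1, M\<^sub>2\<close> are pairwise disjoint perfect matchings, and the union of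
  \<open>M\<^sub>j\<close> and \<open>M\<^sub>j\<^sub>+\<^sub>d\<close> is the single cycle \<open>a\<^sub>0 b\<^sub>j\<^sub>+\<^sub>d a\<^sub>d b\<^sub>j\<^sub>+\<^sub>2\<^sub>d a\<^sub>2\<^sub>d \<dots>\<close> as soon as \<open>d\<close> is
  invertible modulo \<open>n\<close>, which holds for \<open>d \<in> {1, 2}\<close> since \<open>n\<close> is odd.

  Hence \<open>{\<emptyset>, M\<^sub>0 \<union> M\<^sub>1, M\<^sub>0 \<union> M\<^sub>2, M\<^sub>1 \<union> M\<^sub>2}\<close> is a connectivity code: any two members differ
  by a union of two matchings, i.e. a Hamilton cycle.

  Conversely, suppose five members form a code. Each of the ten differences is connected
  on \<open>2n\<close> vertices, so it has at least \<open>2n - 1\<close> edges, and at least \<open>2n\<close> edges for a pair of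
  members whose sizes have the same parity (such a pair exists among five). An edge lying in
  \<open>k\<close> of the five members lies in \<open>k (5 - k) \<le> 6\<close> differences, so
  \<open>10 (2n - 1) + 1 \<le> 6 \<cdot> 3n\<close>, which fails for \<open>n \<ge> 5\<close>.
\<close>

section \<open>Connected graphs and symmetric differences\<close>

lemma card_le_Suc_card_edges_if_connected:
  assumes "connected_graph V F" and "finite V" and "finite F"
  shows "card V \<le> Suc (card F)"
proof -
  define R where "R = (\<lambda>x y. {x, y} \<in> F)"
  from assms(1) obtain r where r: "r \<in> V" and reach: "\<And>v. v \<in> V \<Longrightarrow> R\<^sup>*\<^sup>* v r"
    unfolding connected_graph_def R_def by blast
  define dist where "dist v = (LEAST k. (R ^^ k) v r)" for v
  have dist: "(R ^^ dist v) v r" if "v \<in> V" for v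
    unfolding dist_def using reach[OF that] by (metis LeastI_ex rtranclp_power)
  have "\<exists>w. R v w \<and> dist w < dist v" if "v \<in> V - {r}" for v
  proof (cases "dist v")
    case 0
    with dist[of v] that show ?thesis by auto
  next
    case (Suc k)
    with dist[of v] that obtain w where "R v w" "(R ^^ k) w r"
      by (metis DiffD1 relpowp_Suc_D2)
    then show ?thesis
      using Suc unfolding dist_def by (metis Least_le le_imp_less_Suc)
  qed
  then obtain nxt where nxt: "\<And>v. v \<in> V - {r} \<Longrightarrow> R v (nxt v) \<and> dist (nxt v) < dist v"
    by metis
  \<comment> \<open>Every vertex other than the root owns the edge to its successor on a shortest path to the root.\<close>
  have "inj_on (\<lambda>v. {v, nxt v}) (V - {r})"
  proof (rule inj_onI)
    fix u v assume u: "u \<in> V - {r}" and v: "v \<in> V - {r}" and eq: "{u, nxt u} = {v, nxt v}"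
    show "u = v"
    proof (rule ccontr)
      assume "u \<noteq> v"
      with eq have "u = nxt v" "v = nxt u" by (auto simp: doubleton_eq_iff)
      then have "dist u < dist v" "dist v < dist u"
        using nxt[OF u] nxt[OF v] by (simp_all only:)
      then show False by simp
    qed
  qed
  moreover have "(\<lambda>v. {v, nxt v}) ` (V - {r}) \<subseteq> F"
    using nxt unfolding R_def by auto
  ultimately have "card (V - {r}) \<le> card F"
    using assms(3) by (rule card_inj_on_le)
  with r assms(2) show ?thesis by simp
qed

lemma hamilton_cycle_connected:
  assumes "hamilton_cycle V E F"
  shows "connected_graph V F"
proof -
  obtain vs where vs: "set vs = V" "length vs \<ge> 3"
    and F: "F = {{vs ! k, vs ! ((k + 1) mod length vs)} | k. k < length vs}"
    using assms unfolding hamilton_cycle_def by blast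
  define R where "R = (\<lambda>x y. {x, y} \<in> F)"
  have R_sym: "R x y \<Longrightarrow> R y x" for x y
    unfolding R_def by (simp add: insert_commute)
  have step: "R (vs ! k) (vs ! Suc k)" if "Suc k < length vs" for k
    unfolding R_def F using that by force
  have to_first: "R\<^sup>*\<^sup>* (vs ! k) (vs ! 0)" and from_first: "R\<^sup>*\<^sup>* (vs ! 0) (vs ! k)"
    if "k < length vs" for k
    using that
  proof (induction k)
    case (Suc k)
    { case 1 with Suc.IH step[of k] R_sym show ?case
        by (meson Suc_lessD converse_rtranclp_into_rtranclp) }
    { case 2 with Suc.IH step[of k] show ?case
        by (meson Suc_lessD rtranclp.rtrancl_into_rtrancl) }
  qed simp_all
  show ?thesis
    unfolding connected_graph_def
  proof (intro conjI ballI)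
    show "V \<noteq> {}" using vs by auto
  next
    fix u v assume "u \<in> V" "v \<in> V"
    then obtain a b where "a < length vs" "b < length vs" "u = vs ! a" "v = vs ! b"
      using vs(1) by (metis in_set_conv_nth)
    then show "(\<lambda>x y. {x, y} \<in> F)\<^sup>*\<^sup>* u v"
      using to_first from_first unfolding R_def by (meson rtranclp_trans)
  qed
qed

lemma card_sym_diff:
  assumes "finite A" and "finite B"
  shows "card (sym_diff A B) + 2 * card (A \<inter> B) = card A + card B"
proof -
  have "card (sym_diff A B) = card (A - B) + card (B - A)"
    unfolding sym_diff_def using assms by (intro card_Un_disjoint) auto
  moreover have "card A = card (A \<inter> B) + card (A - B)"
    using assms(1) by (rule card_Int_Diff)
  moreover have "card B = card (A \<inter> B) + card (B - A)"
    using card_Int_Diff[OF assms(2), of A] by (simp add: Int_commute)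
  ultimately show ?thesis by linarith
qed

lemma even_card_sym_diff_iff:
  assumes "finite A" and "finite B"
  shows "even (card (sym_diff A B)) \<longleftrightarrow> (even (card A) \<longleftrightarrow> even (card B))"
proof -
  have "even (card (sym_diff A B) + 2 * card (A \<inter> B)) \<longleftrightarrow> even (card A + card B)"
    using card_sym_diff[OF assms] by simp
  then show ?thesis by simp
qed

lemma card_sym_diff_eq_sum:
  assumes "finite E" and "A \<subseteq> E" and "B \<subseteq> E"
  shows "card (sym_diff A B) = (\<Sum>e\<in>E. if (e \<in> A) \<noteq> (e \<in> B) then 1 else 0)"
proof -
  have "sym_diff A B = {e \<in> E. (e \<in> A) \<noteq> (e \<in> B)}"
    unfolding sym_diff_def using assms by auto
  with assms(1) show ?thesis by (simp add: sum.If_cases Int_def)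
qed

lemma sum_sum_card_sym_diff:
  assumes "finite E" and "finite C" and "\<And>F. F \<in> C \<Longrightarrow> F \<subseteq> E"
  shows "(\<Sum>F\<in>C. \<Sum>G\<in>C. card (sym_diff F G))
    = (\<Sum>e\<in>E. 2 * (card {F\<in>C. e \<in> F} * card {F\<in>C. e \<notin> F}))"
proof -
  have pairs: "(\<Sum>F\<in>C. \<Sum>G\<in>C. if (e \<in> F) \<noteq> (e \<in> G) then 1 else 0 :: nat)
      = 2 * (card {F\<in>C. e \<in> F} * card {F\<in>C. e \<notin> F})" for e
  proof -
    have "(\<Sum>G\<in>C. if (e \<in> F) \<noteq> (e \<in> G) then 1 else 0 :: nat)
        = (if e \<in> F then card {G\<in>C. e \<notin> G} else card {G\<in>C. e \<in> G})" for F
      using assms(2) by (simp add: sum.If_cases Int_def)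
    moreover have "(\<Sum>F\<in>C. if e \<in> F then b else a) = card {F\<in>C. e \<in> F} * b + card {F\<in>C. e \<notin> F} * a"
      for a b :: nat
      using assms(2) by (simp add: sum.If_cases Int_def Compl_eq)
    ultimately show ?thesis
      by simp
  qed
  have "(\<Sum>F\<in>C. \<Sum>G\<in>C. card (sym_diff F G))
      = (\<Sum>F\<in>C. \<Sum>G\<in>C. \<Sum>e\<in>E. if (e \<in> F) \<noteq> (e \<in> G) then 1 else 0)"
    using assms by (simp add: card_sym_diff_eq_sum)
  also have "\<dots> = (\<Sum>F\<in>C. \<Sum>e\<in>E. \<Sum>G\<in>C. if (e \<in> F) \<noteq> (e \<in> G) then 1 else 0)"
    by (rule sum.cong[OF refl], rule sum.swap)
  also have "\<dots> = (\<Sum>e\<in>E. \<Sum>F\<in>C. \<Sum>G\<in>C. if (e \<in> F) \<noteq> (e \<in> G) then 1 else 0)"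
    by (rule sum.swap)
  also have "\<dots> = (\<Sum>e\<in>E. 2 * (card {F\<in>C. e \<in> F} * card {F\<in>C. e \<notin> F}))"
    by (rule sum.cong[OF refl pairs])
  finally show ?thesis .
qed

lemma four_mult_diff_le_square:
  fixes k c :: nat
  assumes "k \<le> c"
  shows "4 * (k * (c - k)) \<le> c\<^sup>2"
proof -
  have "int (4 * (k * (c - k))) = int c ^ 2 - (int c - 2 * int k) ^ 2"
    using assms by (simp add: of_nat_diff power2_eq_square algebra_simps)
  also have "\<dots> \<le> int (c\<^sup>2)"
    by simp
  finally show ?thesis
    by (simp only: of_nat_le_iff)
qed

section \<open>Bounds on connectivity codes\<close>

lemma obtain_pair_same_card_parity:
  assumes "finite C" and "2 < card C"
  obtains F G where "F \<in> C" "G \<in> C" "F \<noteq> G" "even (card F) \<longleftrightarrow> even (card G)"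
proof -
  have "\<not> inj_on (\<lambda>F. even (card F)) C"
  proof
    assume "inj_on (\<lambda>F. even (card F)) C"
    then have "card C \<le> card (UNIV :: bool set)"
      by (rule card_inj_on_le) simp_all
    with assms(2) show False by simp
  qed
  with that show ?thesis
    unfolding inj_on_def by blast
qed

lemma card_sym_diff_ge_if_connected:
  assumes "connected_graph V (sym_diff F G)"
    and "finite V" and "finite F" and "finite G" and "even (card V)"
  shows "card V - 1 + (if even (card F) = even (card G) then 1 else 0) \<le> card (sym_diff F G)"
proof -
  have "card V \<noteq> 0"
    using assms(1,2) unfolding connected_graph_def by simp
  moreover have "card V \<le> Suc (card (sym_diff F G))"
    using assms(1-4) unfolding sym_diff_def by (intro card_le_Suc_card_edges_if_connected) auto
  moreover have "even (card (sym_diff F G))" if "even (card F) = even (card G)"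
    using that assms(3,4) by (simp add: even_card_sym_diff_iff)
  ultimately show ?thesis
    using assms(5) by (auto; presburger)
qed

lemma sum_sum_card_sym_diff_le:
  assumes "finite E" and "finite C" and "\<And>F. F \<in> C \<Longrightarrow> F \<subseteq> E"
  shows "(\<Sum>F\<in>C. \<Sum>G\<in>C. card (sym_diff F G)) \<le> 2 * (card C ^ 2 div 4) * card E"
proof -
  have "2 * (card {F\<in>C. e \<in> F} * card {F\<in>C. e \<notin> F}) \<le> 2 * (card C ^ 2 div 4)" for e
  proof -
    let ?k = "card {F\<in>C. e \<in> F}"
    have "{F\<in>C. e \<notin> F} = C - {F\<in>C. e \<in> F}"
      by blast
    then have "card {F\<in>C. e \<notin> F} = card C - ?k"
      using assms(2) by (simp add: card_Diff_subset)
    moreover have "?k \<le> card C"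
      using assms(2) by (intro card_mono) auto
    then have "4 * (?k * (card C - ?k)) \<le> card C ^ 2"
      by (rule four_mult_diff_le_square)
    ultimately show ?thesis
      by (simp add: less_eq_div_iff_mult_less_eq mult.commute)
  qed
  then have "(\<Sum>e\<in>E. 2 * (card {F\<in>C. e \<in> F} * card {F\<in>C. e \<notin> F}))
      \<le> (\<Sum>e\<in>E. 2 * (card C ^ 2 div 4))"
    by (rule sum_mono)
  with sum_sum_card_sym_diff[OF assms] show ?thesis
    by (simp add: mult.commute)
qed

lemma card_vertices_le_if_connectivity_code_card_5:
  assumes code: "connectivity_code V E C" and C: "card C = 5"
    and "finite V" and "finite E" and "even (card V)"
  shows "5 * card V \<le> 3 * card E + 4"
proof -
  have "finite C"
    using C by (simp add: card_ge_0_finite)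
  have sub: "F \<subseteq> E" if "F \<in> C" for F
    using code that unfolding connectivity_code_def by blast
  then have fin: "finite F" if "F \<in> C" for F
    using \<open>finite E\<close> that by (blast intro: finite_subset)
  define s where "s F G = (if even (card F) = even (card G) then 1 else 0 :: nat)" for F G :: "'a set set"
  have pair: "card V - 1 + s F G \<le> card (sym_diff F G)" if "F \<in> C" "G \<in> C" "F \<noteq> G" for F G
    unfolding s_def using code that fin \<open>finite V\<close> \<open>even (card V)\<close>
    by (intro card_sym_diff_ge_if_connected) (auto simp: connectivity_code_def)
  have "2 < card C"
    using C by simp
  then obtain F0 G0 where F0: "F0 \<in> C" and "G0 \<in> C" "F0 \<noteq> G0"
    and "even (card F0) \<longleftrightarrow> even (card G0)"
    by (rule obtain_pair_same_card_parity[OF \<open>finite C\<close>])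
  then have "1 \<le> (\<Sum>G\<in>C - {F0}. s F0 G)"
    using member_le_sum[of G0 "C - {F0}" "s F0"] \<open>finite C\<close> by (simp add: s_def)
  also have "\<dots> \<le> (\<Sum>F\<in>C. \<Sum>G\<in>C - {F}. s F G)"
    using F0 \<open>finite C\<close> by (intro member_le_sum) auto
  finally have "20 * (card V - 1) + 1 \<le> (\<Sum>F\<in>C. \<Sum>G\<in>C - {F}. card V - 1 + s F G)"
    using \<open>finite C\<close> C by (simp add: sum.distrib)
  also have "\<dots> \<le> (\<Sum>F\<in>C. \<Sum>G\<in>C. card (sym_diff F G))"
  proof (intro sum_mono)
    fix F assume "F \<in> C"
    have "(\<Sum>G\<in>C - {F}. card V - 1 + s F G) \<le> (\<Sum>G\<in>C - {F}. card (sym_diff F G))"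
      using pair \<open>F \<in> C\<close> by (intro sum_mono) auto
    also have "\<dots> \<le> (\<Sum>G\<in>C. card (sym_diff F G))"
      using \<open>finite C\<close> by (intro sum_mono2) auto
    finally show "(\<Sum>G\<in>C - {F}. card V - 1 + s F G) \<le> (\<Sum>G\<in>C. card (sym_diff F G))" .
  qed
  also have "\<dots> \<le> 12 * card E"
    using sum_sum_card_sym_diff_le[OF \<open>finite E\<close> \<open>finite C\<close> sub] C by simp
  finally show ?thesis
    by simp
qed

lemma card_connectivity_code_le_4:
  assumes code: "connectivity_code V E C"
    and "finite V" and "finite E" and "even (card V)" and "3 * card E + 4 < 5 * card V"
  shows "card C \<le> 4"
proof (rule ccontr)
  assume "\<not> card C \<le> 4"
  then have "5 \<le> card C"
    by simp
  then obtain C' where "C' \<subseteq> C" "card C' = 5"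
    by (rule obtain_subset_with_card_n)
  moreover from this have "connectivity_code V E C'"
    using code unfolding connectivity_code_def by blast
  ultimately have "5 * card V \<le> 3 * card E + 4"
    using assms(2-4) by (intro card_vertices_le_if_connectivity_code_card_5)
  with assms(5) show False
    by simp
qed

lemma connectivity_code_pairwise_unions:
  assumes "A \<inter> B = {}" and "A \<inter> D = {}" and "B \<inter> D = {}" and "A \<union> B \<union> D \<subseteq> E"
    and "connected_graph V (A \<union> B)" and "connected_graph V (A \<union> D)"
    and "connected_graph V (B \<union> D)"
  shows "connectivity_code V E {{}, A \<union> B, A \<union> D, B \<union> D}"
proof -
  have sym_diff_empty: "sym_diff {} X = X" "sym_diff X {} = X" for X :: "'a set set"
    unfolding sym_diff_def by auto
  have sym_diff_unions: "sym_diff (A \<union> B) (A \<union> D) = B \<union> D" "sym_diff (A \<union> D) (A \<union> B) = B \<union> D"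
    "sym_diff (A \<union> B) (B \<union> D) = A \<union> D" "sym_diff (B \<union> D) (A \<union> B) = A \<union> D"
    "sym_diff (A \<union> D) (B \<union> D) = A \<union> B" "sym_diff (B \<union> D) (A \<union> D) = A \<union> B"
    using assms(1-3) unfolding sym_diff_def by blast+
  show ?thesis
    unfolding connectivity_code_def
  proof (intro conjI ballI impI)
    fix F assume "F \<in> {{}, A \<union> B, A \<union> D, B \<union> D}"
    with assms(4) show "F \<subseteq> E"
      by blast
  next
    fix F G assume "F \<in> {{}, A \<union> B, A \<union> D, B \<union> D}" "G \<in> {{}, A \<union> B, A \<union> D, B \<union> D}" "F \<noteq> G"
    then have "sym_diff F G \<in> {A \<union> B, A \<union> D, B \<union> D}"
      by (elim insertE emptyE) (simp_all add: sym_diff_empty sym_diff_unions)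
    with assms(5-7) show "connected_graph V (sym_diff F G)"
      by (elim insertE emptyE) simp_all
  qed
qed

lemma card_pairwise_unions:
  assumes "A \<inter> B = {}" and "A \<inter> D = {}" and "B \<inter> D = {}"
    and "A \<noteq> {}" and "B \<noteq> {}" and "D \<noteq> {}"
  shows "card {{}, A \<union> B, A \<union> D, B \<union> D} = 4"
proof -
  have "{} \<noteq> A \<union> B" "{} \<noteq> A \<union> D" "{} \<noteq> B \<union> D"
    "A \<union> B \<noteq> A \<union> D" "A \<union> B \<noteq> B \<union> D" "A \<union> D \<noteq> B \<union> D"
    using assms by blast+
  then show ?thesis
    by simp
qed

lemma m_code_eqI:
  assumes "connectivity_code V E C" and "card C = k"
    and "\<And>C'. connectivity_code V E C' \<Longrightarrow> card C' \<le> k"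
  shows "m_code V E = k"
proof -
  have "{card C | C. connectivity_code V E C} \<subseteq> {..k}"
    using assms(3) by auto
  then have "finite {card C | C. connectivity_code V E C}"
    by (rule finite_subset) simp
  with assms show ?thesis
    unfolding m_code_def by (intro Max_eqI) auto
qed

section \<open>The graph \<open>H\<^sub>n\<close>\<close>

lemma bij_betw_mult_mod:
  fixes d n c :: nat
  assumes "coprime d n"
  shows "bij_betw (\<lambda>m. ((m + c) * d) mod n) {..<n} {..<n}"
proof -
  have "inj_on (\<lambda>m. ((m + c) * d) mod n) {..<n}"
  proof (rule inj_onI)
    fix m m' assume "m \<in> {..<n}" "m' \<in> {..<n}" "((m + c) * d) mod n = ((m' + c) * d) mod n"
    then show "m = m'"
      using assms unfolding lessThan_iff
      by (metis cong_def cong_mult_rcancel_nat cong_add_rcancel_nat cong_less_modulus_unique_nat)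
  qed
  moreover have "(\<lambda>m. ((m + c) * d) mod n) ` {..<n} \<subseteq> {..<n}"
    by auto
  ultimately show ?thesis
    unfolding bij_betw_def by (simp add: endo_inj_surj)
qed

lemma bij_betw_add_mod:
  fixes c n :: nat
  shows "bij_betw (\<lambda>m. (m + c) mod n) {..<n} {..<n}"
  using bij_betw_mult_mod[of 1 n c] by simp

lemma finite_Hn_vertices: "finite (Hn_vertices n)"
  unfolding Hn_vertices_def by simp

lemma card_Hn_vertices: "card (Hn_vertices n) = 2 * n"
  unfolding Hn_vertices_def by (subst card_Un_disjoint) (auto simp: card_image)

lemma finite_Hn_edges: "finite (Hn_edges n)"
  unfolding Hn_edges_def Mj_def by auto

lemma card_Mj_le: "card (Mj n j) \<le> n"
proof -
  have "Mj n j = (\<lambda>i. {Inl i, Inr ((i + j) mod n)}) ` {..<n}"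
    unfolding Mj_def by auto
  then show ?thesis
    using card_image_le[of "{..<n}"] by simp
qed

lemma card_Hn_edges_le: "card (Hn_edges n) \<le> 3 * n"
proof -
  have "card (Hn_edges n) \<le> card (Mj n 0) + card (Mj n 1) + card (Mj n 2)"
    unfolding Hn_edges_def by (rule order_trans[OF card_Un_le add_right_mono[OF card_Un_le]])
  with card_Mj_le[of n 0] card_Mj_le[of n 1] card_Mj_le[of n 2] show ?thesis
    by linarith
qed

lemma Mj_nonempty: "0 < n \<Longrightarrow> Mj n j \<noteq> {}"
  unfolding Mj_def by blast

lemma Mj_disjoint:
  assumes "j < n" and "j' < n" and "j \<noteq> j'"
  shows "Mj n j \<inter> Mj n j' = {}"
proof -
  have "(i + j) mod n \<noteq> (i + j') mod n" for i
    using assms by (metis cong_def cong_add_lcancel_nat cong_less_modulus_unique_nat)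
  then show ?thesis
    unfolding Mj_def by (auto simp: doubleton_eq_iff)
qed

lemma card_edges_at_Mj:
  assumes "v \<in> Hn_vertices n"
  shows "card {e \<in> Mj n j. v \<in> e} = 1"
proof -
  from assms consider (a) i where "i < n" "v = Inl i" | (b) k where "k < n" "v = Inr k"
    unfolding Hn_vertices_def by auto
  then show ?thesis
  proof cases
    case a
    then have "{e \<in> Mj n j. v \<in> e} = {{Inl i, Inr ((i + j) mod n)}}"
      unfolding Mj_def by auto
    then show ?thesis
      by simp
  next
    case b
    have bij: "bij_betw (\<lambda>i. (i + j) mod n) {..<n} {..<n}"
      by (rule bij_betw_add_mod)
    then have "k \<in> (\<lambda>i. (i + j) mod n) ` {..<n}"
      using \<open>k < n\<close> by (simp add: bij_betw_def)
    then obtain i where i: "i < n" "(i + j) mod n = k"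
      by auto
    have unique: "i' = i" if "i' < n" "(i' + j) mod n = k" for i'
      using inj_onD[OF bij_betw_imp_inj_on[OF bij], of i' i] that i by simp
    have "{e \<in> Mj n j. v \<in> e} = {{Inl i, Inr k}}"
    proof (intro equalityI subsetI)
      fix e assume "e \<in> {e \<in> Mj n j. v \<in> e}"
      then obtain i' where "i' < n" "e = {Inl i', Inr ((i' + j) mod n)}" "Inr k \<in> e"
        using b unfolding Mj_def by auto
      with unique show "e \<in> {{Inl i, Inr k}}"
        by auto
    next
      fix e assume "e \<in> {{Inl i, Inr k}}"
      with b i show "e \<in> {e \<in> Mj n j. v \<in> e}"
        unfolding Mj_def by auto
    qed
    then show ?thesis
      by simp
  qed
qed

lemma regular_Hn:
  assumes "2 < n"
  shows "regular 3 (Hn_vertices n) (Hn_edges n)"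
  unfolding regular_def degree_def
proof
  fix v assume v: "v \<in> Hn_vertices n"
  have "{e \<in> Hn_edges n. v \<in> e}
      = {e \<in> Mj n 0. v \<in> e} \<union> {e \<in> Mj n 1. v \<in> e} \<union> {e \<in> Mj n 2. v \<in> e}"
    unfolding Hn_edges_def by auto
  moreover have "Mj n 0 \<inter> Mj n 1 = {}" "Mj n 0 \<inter> Mj n 2 = {}" "Mj n 1 \<inter> Mj n 2 = {}"
    using assms by (simp_all add: Mj_disjoint)
  then have "{e \<in> Mj n 0. v \<in> e} \<inter> {e \<in> Mj n 1. v \<in> e} = {}"
    "({e \<in> Mj n 0. v \<in> e} \<union> {e \<in> Mj n 1. v \<in> e}) \<inter> {e \<in> Mj n 2. v \<in> e} = {}"
    by blast+
  moreover have "finite {e \<in> Mj n j. v \<in> e}" for j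
    using card_edges_at_Mj[OF v] by (intro card_ge_0_finite) simp
  ultimately show "card {e \<in> Hn_edges n. v \<in> e} = 3"
    using card_edges_at_Mj[OF v] by (simp add: card_Un_disjoint)
qed

text \<open>Position \<open>k\<close> on the cycle \<open>a\<^sub>0 b\<^sub>j\<^sub>+\<^sub>d a\<^sub>d b\<^sub>j\<^sub>+\<^sub>2\<^sub>d a\<^sub>2\<^sub>d \<dots>\<close>, with \<open>a\<^sub>i = Inl i\<close> and \<open>b\<^sub>i = Inr i\<close>.\<close>

definition Hn_walk :: "nat \<Rightarrow> nat \<Rightarrow> nat \<Rightarrow> nat \<Rightarrow> nat + nat" where
  "Hn_walk n j d k =
    (if even k then Inl ((k div 2 * d) mod n) else Inr (((k div 2 + 1) * d + j) mod n))"

lemma Hn_walk_wrap: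
  assumes "m < n"
  shows "Hn_walk n j d ((2 * m + 2) mod (2 * n)) = Inl (((m + 1) * d) mod n)"
proof (cases "m + 1 < n")
  case True
  then have "(2 * m + 2) mod (2 * n) = 2 * (m + 1)"
    by simp
  then show ?thesis
    by (simp add: Hn_walk_def)
next
  case False
  with assms have "m + 1 = n"
    by simp
  then have "2 * m + 2 = 2 * n"
    by simp
  then have "(2 * m + 2) mod (2 * n) = 2 * 0"
    by simp
  with \<open>m + 1 = n\<close> show ?thesis
    by (simp add: Hn_walk_def)
qed

lemma inj_on_Hn_walk:
  assumes "coprime d n"
  shows "inj_on (Hn_walk n j d) {..<2 * n}"
proof (rule inj_onI)
  fix a b assume "a \<in> {..<2 * n}" "b \<in> {..<2 * n}" and eq: "Hn_walk n j d a = Hn_walk n j d b"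
  then have ab: "a div 2 \<in> {..<n}" "b div 2 \<in> {..<n}"
    by auto
  have inj_mult: "inj_on (\<lambda>m. ((m + c) * d) mod n) {..<n}" for c
    using bij_betw_mult_mod[OF assms] by (rule bij_betw_imp_inj_on)
  have inj_add: "inj_on (\<lambda>m. (m + j) mod n) {..<n}"
    using bij_betw_add_mod by (rule bij_betw_imp_inj_on)
  show "a = b"
  proof (cases "even a")
    case True
    with eq have "even b" "((a div 2 + 0) * d) mod n = ((b div 2 + 0) * d) mod n"
      unfolding Hn_walk_def by (auto split: if_splits)
    with True ab inj_mult[of 0] show ?thesis
      by (metis inj_onD dvd_mult_div_cancel)
  next
    case False
    with eq have "odd b" "(((a div 2 + 1) * d) mod n + j) mod n = (((b div 2 + 1) * d) mod n + j) mod n"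
      unfolding Hn_walk_def by (auto split: if_splits simp: mod_add_left_eq)
    moreover have "((a div 2 + 1) * d) mod n \<in> {..<n}" "((b div 2 + 1) * d) mod n \<in> {..<n}"
      using ab by auto
    ultimately have "((a div 2 + 1) * d) mod n = ((b div 2 + 1) * d) mod n"
      using inj_onD[OF inj_add] by blast
    with False \<open>odd b\<close> ab inj_mult[of 1] show ?thesis
      by (metis inj_onD odd_two_times_div_two_succ)
  qed
qed

lemma Hn_walk_edge_even:
  assumes "m < n"
  shows "{Hn_walk n j d (2 * m), Hn_walk n j d ((2 * m + 1) mod (2 * n))}
    = {Inl ((m * d) mod n), Inr (((m * d) mod n + (j + d)) mod n)}"
proof -
  have "Hn_walk n j d (2 * m) = Inl ((m * d) mod n)"
    by (simp add: Hn_walk_def)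
  moreover have "Hn_walk n j d ((2 * m + 1) mod (2 * n)) = Inr (((m + 1) * d + j) mod n)"
    using assms by (simp add: Hn_walk_def)
  moreover have "((m * d) mod n + (j + d)) mod n = (m * d + (j + d)) mod n"
    by (rule mod_add_left_eq)
  moreover have "\<dots> = ((m + 1) * d + j) mod n"
    by (simp add: algebra_simps)
  ultimately show ?thesis
    by (simp only:)
qed

lemma Hn_walk_edge_odd:
  assumes "m < n"
  shows "{Hn_walk n j d (2 * m + 1), Hn_walk n j d ((2 * m + 1 + 1) mod (2 * n))}
    = {Inl (((m + 1) * d) mod n), Inr ((((m + 1) * d) mod n + j) mod n)}"
proof -
  have "Hn_walk n j d (2 * m + 1) = Inr ((((m + 1) * d) mod n + j) mod n)"
    by (simp add: Hn_walk_def mod_add_left_eq)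
  with Hn_walk_wrap[OF assms] show ?thesis
    by (simp add: insert_commute)
qed

lemma Hn_walk_edge_in_Mj:
  assumes "k < 2 * n"
  shows "{Hn_walk n j d k, Hn_walk n j d ((k + 1) mod (2 * n))} \<in> Mj n j \<union> Mj n (j + d)"
proof -
  have in_Mj: "{Inl (x mod n), Inr ((x mod n + i) mod n)} \<in> Mj n i" if "m < n" for m x i
    unfolding Mj_def using that by auto
  show ?thesis
  proof (cases "even k")
    case True
    then obtain m where "k = 2 * m"
      by blast
    with assms have "m < n"
      by simp
    with \<open>k = 2 * m\<close> Hn_walk_edge_even[of m n j d] in_Mj[of m "m * d" "j + d"] show ?thesis
      by simp
  next
    case False
    then obtain m where "k = 2 * m + 1"
      by (blast elim: oddE)
    with assms have "m < n"
      by simp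
    with \<open>k = 2 * m + 1\<close> Hn_walk_edge_odd[of m n j d] in_Mj[of m "(m + 1) * d" j] show ?thesis
      by simp
  qed
qed

lemma Hn_walk_edges:
  assumes "coprime d n"
  shows "{{Hn_walk n j d k, Hn_walk n j d ((k + 1) mod (2 * n))} | k. k < 2 * n}
    = Mj n j \<union> Mj n (j + d)"
proof -
  have surj: "\<exists>m < n. ((m + c) * d) mod n = i" if "i < n" for c i
  proof -
    have "i \<in> (\<lambda>m. ((m + c) * d) mod n) ` {..<n}"
      using that bij_betw_mult_mod[OF assms, of c] by (simp add: bij_betw_def)
    then show ?thesis
      by auto
  qed
  have "\<exists>k < 2 * n. e = {Hn_walk n j d k, Hn_walk n j d ((k + 1) mod (2 * n))}"
    if "e \<in> Mj n j \<union> Mj n (j + d)" for e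
  proof -
    from that consider (M) i where "i < n" "e = {Inl i, Inr ((i + j) mod n)}"
      | (M') i where "i < n" "e = {Inl i, Inr ((i + (j + d)) mod n)}"
      unfolding Mj_def by blast
    then show ?thesis
    proof cases
      case M
      with surj[of i 1] obtain m where "m < n" "((m + 1) * d) mod n = i"
        by blast
      with M Hn_walk_edge_odd[of m n j d] show ?thesis
        by (intro exI[of _ "2 * m + 1"]) auto
    next
      case M'
      with surj[of i 0] obtain m where "m < n" "(m * d) mod n = i"
        by auto
      with M' Hn_walk_edge_even[of m n j d] show ?thesis
        by (intro exI[of _ "2 * m"]) auto
    qed
  qed
  with Hn_walk_edge_in_Mj show ?thesis
    by blast
qed

lemma hamilton_cycle_Mj_union:
  assumes "coprime d n" and "2 \<le> n" and "Mj n j \<union> Mj n (j + d) \<subseteq> E"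
  shows "hamilton_cycle (Hn_vertices n) E (Mj n j \<union> Mj n (j + d))"
proof -
  define vs where "vs = map (Hn_walk n j d) [0..<2 * n]"
  have "distinct vs"
    using inj_on_Hn_walk[OF assms(1)] unfolding vs_def by (simp add: distinct_map atLeast0LessThan)
  have "set vs = Hn_vertices n"
  proof (rule card_subset_eq[OF finite_Hn_vertices])
    show "set vs \<subseteq> Hn_vertices n"
      unfolding vs_def Hn_walk_def Hn_vertices_def using assms(2) by auto
    show "card (set vs) = card (Hn_vertices n)"
      using distinct_card[OF \<open>distinct vs\<close>] by (simp add: vs_def card_Hn_vertices)
  qed
  moreover have "{{vs ! k, vs ! ((k + 1) mod length vs)} | k. k < length vs}
      = {{Hn_walk n j d k, Hn_walk n j d ((k + 1) mod (2 * n))} | k. k < 2 * n}"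
    unfolding setcompr_eq_image using assms(2)
    by (intro image_cong) (simp_all add: vs_def del: upt_Suc)
  ultimately show ?thesis
    unfolding hamilton_cycle_def using assms \<open>distinct vs\<close> Hn_walk_edges[OF assms(1), of j]
    by (intro conjI exI[of _ vs]) (auto simp: vs_def)
qed

lemma hamilton_cycle_Hn:
  assumes "odd n" and "1 < n" and "j \<in> {0, 1, 2}" and "j' \<in> {0, 1, 2}" and "j \<noteq> j'"
  shows "hamilton_cycle (Hn_vertices n) (Hn_edges n) (Mj n j \<union> Mj n j')"
proof -
  have ordered: "hamilton_cycle (Hn_vertices n) (Hn_edges n) (Mj n i \<union> Mj n i')"
    if "i < i'" "i' \<le> 2" for i i' :: nat
  proof -
    have "i' - i = 1 \<or> i' - i = 2"
      using that by auto
    then have "coprime (i' - i) n"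
      using \<open>odd n\<close> by auto
    moreover have "i \<in> {0, 1}" "i' \<in> {1, 2}"
      using that by auto
    then have "Mj n i \<union> Mj n (i + (i' - i)) \<subseteq> Hn_edges n"
      using that unfolding Hn_edges_def by auto
    ultimately show ?thesis
      using hamilton_cycle_Mj_union[of "i' - i" n i] that assms(2) by simp
  qed
  show ?thesis
  proof (cases "j < j'")
    case True
    with assms(4) show ?thesis
      by (intro ordered) auto
  next
    case False
    with assms(5) have "j' < j"
      by simp
    moreover have "j \<le> 2"
      using assms(3) by auto
    ultimately show ?thesis
      using ordered[of j' j] by (simp add: Un_commute)
  qed
qed

lemma m_code_Hn:
  assumes "odd n" and "3 < n"
  shows "m_code (Hn_vertices n) (Hn_edges n) = 4"
proof -
  have disjoint: "Mj n 0 \<inter> Mj n 1 = {}" "Mj n 0 \<inter> Mj n 2 = {}" "Mj n 1 \<inter> Mj n 2 = {}"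
    using assms by (simp_all add: Mj_disjoint)
  have even: "even (card (Hn_vertices n))"
    by (simp add: card_Hn_vertices)
  have few_edges: "3 * card (Hn_edges n) + 4 < 5 * card (Hn_vertices n)"
    using card_Hn_edges_le[of n] assms unfolding card_Hn_vertices by presburger
  have "connected_graph (Hn_vertices n) (Mj n j \<union> Mj n j')"
    if "j \<in> {0, 1, 2}" "j' \<in> {0, 1, 2}" "j \<noteq> j'" for j j'
    using assms that by (intro hamilton_cycle_connected[OF hamilton_cycle_Hn]) auto
  then have "connectivity_code (Hn_vertices n) (Hn_edges n)
      {{}, Mj n 0 \<union> Mj n 1, Mj n 0 \<union> Mj n 2, Mj n 1 \<union> Mj n 2}"
    using disjoint by (intro connectivity_code_pairwise_unions) (auto simp: Hn_edges_def)
  moreover have "card {{}, Mj n 0 \<union> Mj n 1, Mj n 0 \<union> Mj n 2, Mj n 1 \<union> Mj n 2} = 4"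
    using disjoint assms by (intro card_pairwise_unions) (simp_all add: Mj_nonempty)
  moreover have "card C \<le> 4" if "connectivity_code (Hn_vertices n) (Hn_edges n) C" for C
    using that finite_Hn_vertices finite_Hn_edges even few_edges by (rule card_connectivity_code_le_4)
  ultimately show ?thesis
    by (rule m_code_eqI)
qed

theorem mainTheorem14:
  fixes n :: nat
  assumes "n > 3" and "odd n"
  shows "regular 3 (Hn_vertices n) (Hn_edges n)
    \<and> (\<forall>j\<in>{0,1,2}. \<forall>j'\<in>{0,1,2}. j \<noteq> j' \<longrightarrow>
          hamilton_cycle (Hn_vertices n) (Hn_edges n) (Mj n j \<union> Mj n j'))
    \<and> m_code (Hn_vertices n) (Hn_edges n) = 4"
proof (intro conjI ballI impI)
  show "regular 3 (Hn_vertices n) (Hn_edges n)"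
    using assms by (intro regular_Hn) simp
  show "hamilton_cycle (Hn_vertices n) (Hn_edges n) (Mj n j \<union> Mj n j')"
    if "j \<in> {0, 1, 2}" "j' \<in> {0, 1, 2}" "j \<noteq> j'" for j j'
    using assms that by (intro hamilton_cycle_Hn) auto
  show "m_code (Hn_vertices n) (Hn_edges n) = 4"
    using assms by (intro m_code_Hn)
qed

end
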